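(* Let $n>m\ge1$, $T\ge1$, $0<\gamma<1$, $x_0,\dots,x_T\in\mathbb{R}^m$, let $\sigma:\mathbb{R}\to[-1,1]$ be continuously differentiable (applied componentwise), and let $H\in\mathbb{R}^{m\times n}$ be the projection onto the first $m$ coordinates. Fix a policy $\pi_i=(F_i,G_i)$ and let $\Delta\pi=-\nabla_\pi J'_{\pi_i}(\pi)\big|_{\pi=\pi_i}$, where $J'_{\pi_i}(\pi)=c(\mathbf{U}_{\pi_i})+\gamma J^{\pi_i}(S_\pi\mathbf{U}_{\pi_i})$. If $\Delta\pi\neq 0$, then there exists $\alpha_0>0$ such that for all $0<\alpha\le\alpha_0$, $$J^{\pi_i+\alpha\Delta\pi}(\mathbf{U}_{\pi_i})<J^{\pi_i}(\mathbf{U}_{\pi_i}).$$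
   Context: A policy is a pair $\pi=(F,G)$ with $F\in\mathbb{R}^{n\times n}$, $G\in\mathbb{R}^{n\times(m+1)}$, identified with a vector in $\mathbb{R}^{n(n+m+1)}$ (so sums, scalar multiples and gradients with respect to $\pi$ are taken componentwise). A state is a sequence $\mathbf{U}=(u_0,u_1,\dots,u_T)$ with $u_t\in\mathbb{R}^n$. For $x\in\mathbb{R}^m$, $[x;1]\in\mathbb{R}^{m+1}$ is $x$ with a $1$ appended. Define $S_\pi\mathbf{U}=(u'_0,\dots,u'_T)$ by $u'_0=0$ and $u'_{t+1}=\sigma(Fu_t+G[x_t;1])$ for $0\le t<T$. Let $\mathbf{U}_\pi=(u_0,\dots,u_T)$ be the network trajectory $u_0=0$, $u_{t+1}=\sigma(Fu_t+G[x_t;1])$ for $0\le t<T$. The immediate cost is $c(\mathbf{U})=\sum_{t=1}^T\|Hu_t-x_t\|^2$ (Euclidean norm), and the discounted cost of state $\mathbf{U}$ under policy $\pi$ is $J^\pi(\mathbf{U})=\sum_{k=0}^\infty\gamma^k c(S_\pi^k\mathbf{U})$. *)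

theory Defs
  imports "HOL-Analysis.Analysis"
begin

text \<open>State space R^n is modelled as real^('m + 'k) (n = m + k, k >= 1, so n > m >= 1);
  the first m coordinates are the indices Inl i. A policy is a pair (F, G) with
  F :: real^'n^'n and G :: real^('m + unit)^'n (an n x (m+1) matrix), a Euclidean vector
  with the componentwise (Frobenius) inner product.\<close>

definition aug :: "real^'m::finite \<Rightarrow> real^('m + unit)" where
  "aug v = (\<chi> j. case j of Inl i \<Rightarrow> v $ i | Inr _ \<Rightarrow> 1)"

definition sigv :: "(real \<Rightarrow> real) \<Rightarrow> real^'n::finite \<Rightarrow> real^'n" where
  "sigv \<sigma> v = (\<chi> j. \<sigma> (v $ j))"

definition Hproj :: "real^('m::finite + 'k::finite) \<Rightarrow> real^'m" where
  "Hproj u = (\<chi> i. u $ Inl i)"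

text \<open>S_pi U; a state is a sequence t \<mapsto> u_t of which only t = 0..T matters
  (entries beyond T are normalised to 0).\<close>
definition Sop :: "(real \<Rightarrow> real) \<Rightarrow> (nat \<Rightarrow> real^'m) \<Rightarrow> nat
    \<Rightarrow> (real^'n^'n) \<times> (real^('m + unit)^'n) \<Rightarrow> (nat \<Rightarrow> real^'n) \<Rightarrow> (nat \<Rightarrow> real^'n)" where
  "Sop \<sigma> x T \<pi> U = (\<lambda>t. if t = 0 \<or> T < t then 0
      else sigv \<sigma> (fst \<pi> *v U (t - 1) + snd \<pi> *v aug (x (t - 1))))"

fun traj :: "(real \<Rightarrow> real) \<Rightarrow> (nat \<Rightarrow> real^'m) \<Rightarrow> nat
    \<Rightarrow> (real^'n^'n) \<times> (real^('m + unit)^'n) \<Rightarrow> nat \<Rightarrow> real^'n" where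
  "traj \<sigma> x T \<pi> 0 = 0"
| "traj \<sigma> x T \<pi> (Suc t) = (if Suc t \<le> T then
      sigv \<sigma> (fst \<pi> *v traj \<sigma> x T \<pi> t + snd \<pi> *v aug (x t)) else 0)"

definition cost :: "(nat \<Rightarrow> real^'m::finite) \<Rightarrow> nat \<Rightarrow> (nat \<Rightarrow> real^('m + 'k::finite)) \<Rightarrow> real" where
  "cost x T U = (\<Sum>t = 1..T. (norm (Hproj (U t) - x t))\<^sup>2)"

definition Jc :: "(real \<Rightarrow> real) \<Rightarrow> (nat \<Rightarrow> real^'m::finite) \<Rightarrow> nat \<Rightarrow> real
    \<Rightarrow> (real^('m + 'k::finite)^('m + 'k)) \<times> (real^('m + unit)^('m + 'k))
    \<Rightarrow> (nat \<Rightarrow> real^('m + 'k::finite)) \<Rightarrow> real" where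
  "Jc \<sigma> x T \<gamma> \<pi> U = (\<Sum>k. \<gamma> ^ k * cost x T ((Sop \<sigma> x T \<pi> ^^ k) U))"

end

theory Submission
  imports Defs
begin

text \<open>Write \<open>\<pi>(a) = \<pi>\<^sub>i + a \<Delta>\<pi>\<close>, let \<open>U\<close> be the trajectory of \<open>\<pi>\<^sub>i\<close>, and let
  \<open>G(a, b) = J(\<pi>(a), S(\<pi>(b), U))\<close>, where \<open>J(\<pi>, V)\<close> is the discounted cost of \<open>V\<close> under \<open>\<pi>\<close>.
  Since \<open>U\<close> is a fixed point of \<open>S(\<pi>\<^sub>i, -)\<close>, the cost of the updated policy is \<open>G(a, 0)\<close>,
  and the Bellman equation gives \<open>G(a, 0) = c(U) + \<gamma> G(a, a)\<close>. Differentiating at \<open>0\<close> yields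
  \<open>\<partial>\<^sub>1G = \<gamma> (\<partial>\<^sub>1G + \<partial>\<^sub>2G)\<close>, and \<open>\<gamma> \<partial>\<^sub>2G\<close> is the derivative of \<open>J'\<^sub>\<pi>\<^sub>i\<close> along \<open>\<Delta>\<pi>\<close>,
  namely \<open>-\<parallel>\<Delta>\<pi>\<parallel>\<^sup>2\<close>; hence \<open>(1 - \<gamma>) \<partial>\<^sub>1G < 0\<close>.
  \<open>G\<close> is differentiable because \<open>S(\<pi>, -)\<^sup>k V\<close> is the trajectory of \<open>\<pi>\<close> for every \<open>k > T\<close>, so
  the discounted cost is a finite sum of smooth terms plus a geometric tail.\<close>

lemma traj_eq_0: "T < t \<Longrightarrow> traj \<sigma> x T \<pi> t = 0"
  by (cases t) auto

lemma Sop_0 [simp]: "Sop \<sigma> x T \<pi> W 0 = 0"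
  by (simp add: Sop_def)

lemma Sop_Suc [simp]: "Sop \<sigma> x T \<pi> W (Suc t) = (if Suc t \<le> T then
    sigv \<sigma> (fst \<pi> *v W t + snd \<pi> *v aug (x t)) else 0)"
  by (simp add: Sop_def)

lemma Sop_traj: "Sop \<sigma> x T \<pi> (traj \<sigma> x T \<pi>) = traj \<sigma> x T \<pi>"
proof
  fix t
  show "Sop \<sigma> x T \<pi> (traj \<sigma> x T \<pi>) t = traj \<sigma> x T \<pi> t"
    by (cases t) auto
qed

lemma funpow_Sop_apply_eq_traj: "t < k \<Longrightarrow> (Sop \<sigma> x T \<pi> ^^ k) V t = traj \<sigma> x T \<pi> t"
proof (induction k arbitrary: t)
  case 0
  then show ?case by simp
next
  case (Suc k)
  show ?case
  proof (cases t)
    case t: (Suc s)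
    with Suc have "(Sop \<sigma> x T \<pi> ^^ k) V s = traj \<sigma> x T \<pi> s"
      by simp
    with t show ?thesis by simp
  qed simp
qed

lemma funpow_Sop_eq_traj:
  assumes "T < k"
  shows "(Sop \<sigma> x T \<pi> ^^ k) V = traj \<sigma> x T \<pi>"
proof
  fix t
  show "(Sop \<sigma> x T \<pi> ^^ k) V t = traj \<sigma> x T \<pi> t"
  proof (cases "t < k")
    case False
    obtain k' where "k = Suc k'" using assms by (cases k) auto
    with False assms show ?thesis by (cases t) (simp_all add: traj_eq_0)
  qed (rule funpow_Sop_apply_eq_traj)
qed

lemma discounted_cost_tail_sums:
  fixes \<gamma> :: real
  assumes "\<bar>\<gamma>\<bar> < 1"
  shows "(\<lambda>k. \<gamma> ^ (k + Suc T) * cost x T ((Sop \<sigma> x T \<pi> ^^ (k + Suc T)) V))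
    sums (\<gamma> ^ Suc T / (1 - \<gamma>) * cost x T (traj \<sigma> x T \<pi>))"
proof -
  have "(Sop \<sigma> x T \<pi> ^^ (k + Suc T)) V = traj \<sigma> x T \<pi>" for k
    by (rule funpow_Sop_eq_traj) simp
  then have "(\<lambda>k. \<gamma> ^ (k + Suc T) * cost x T ((Sop \<sigma> x T \<pi> ^^ (k + Suc T)) V))
      = (\<lambda>k. \<gamma> ^ k * (\<gamma> ^ Suc T * cost x T (traj \<sigma> x T \<pi>)))"
    by (simp only:) (simp add: power_add mult_ac)
  moreover have "(\<lambda>k. \<gamma> ^ k) sums (1 / (1 - \<gamma>))"
    using geometric_sums[of \<gamma>] assms by simp
  ultimately show ?thesis
    using sums_mult2[of "\<lambda>k. \<gamma> ^ k" "1 / (1 - \<gamma>)" "\<gamma> ^ Suc T * cost x T (traj \<sigma> x T \<pi>)"]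
    by simp
qed

lemma summable_discounted_cost:
  fixes \<gamma> :: real
  assumes "\<bar>\<gamma>\<bar> < 1"
  shows "summable (\<lambda>k. \<gamma> ^ k * cost x T ((Sop \<sigma> x T \<pi> ^^ k) V))"
  using sums_summable[OF discounted_cost_tail_sums[OF assms]]
    summable_iff_shift[where f="\<lambda>k. \<gamma> ^ k * cost x T ((Sop \<sigma> x T \<pi> ^^ k) V)" and k="Suc T"]
  by blast

lemma Jc_finite_horizon:
  fixes \<gamma> :: real
  assumes "\<bar>\<gamma>\<bar> < 1"
  shows "Jc \<sigma> x T \<gamma> \<pi> V = (\<Sum>k\<le>T. \<gamma> ^ k * cost x T ((Sop \<sigma> x T \<pi> ^^ k) V))
    + \<gamma> ^ Suc T / (1 - \<gamma>) * cost x T (traj \<sigma> x T \<pi>)"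
proof -
  let ?f = "\<lambda>k. \<gamma> ^ k * cost x T ((Sop \<sigma> x T \<pi> ^^ k) V)"
  have "Jc \<sigma> x T \<gamma> \<pi> V = (\<Sum>k. ?f (k + Suc T)) + (\<Sum>k<Suc T. ?f k)"
    unfolding Jc_def by (rule suminf_split_initial_segment[OF summable_discounted_cost[OF assms]])
  also have "(\<Sum>k. ?f (k + Suc T)) = \<gamma> ^ Suc T / (1 - \<gamma>) * cost x T (traj \<sigma> x T \<pi>)"
    using discounted_cost_tail_sums[OF assms] by (rule sums_unique[symmetric])
  finally show ?thesis
    by (simp only: lessThan_Suc_atMost add.commute)
qed

lemma Jc_bellman:
  fixes \<gamma> :: real
  assumes "\<bar>\<gamma>\<bar> < 1"
  shows "Jc \<sigma> x T \<gamma> \<pi> V = cost x T V + \<gamma> * Jc \<sigma> x T \<gamma> \<pi> (Sop \<sigma> x T \<pi> V)"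
proof -
  let ?f = "\<lambda>V k. \<gamma> ^ k * cost x T ((Sop \<sigma> x T \<pi> ^^ k) V)"
  have shift: "?f V (Suc k) = \<gamma> * ?f (Sop \<sigma> x T \<pi> V) k" for k
    by (simp add: funpow_Suc_right del: funpow.simps)
  have "(\<Sum>k. ?f V (Suc k)) = Jc \<sigma> x T \<gamma> \<pi> V - ?f V 0"
    unfolding Jc_def by (rule suminf_split_head[OF summable_discounted_cost[OF assms]])
  then have "Jc \<sigma> x T \<gamma> \<pi> V - cost x T V = (\<Sum>k. ?f V (Suc k))"
    by simp
  also have "\<dots> = (\<Sum>k. \<gamma> * ?f (Sop \<sigma> x T \<pi> V) k)"
    by (simp only: shift)
  also have "\<dots> = \<gamma> * Jc \<sigma> x T \<gamma> \<pi> (Sop \<sigma> x T \<pi> V)"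
    unfolding Jc_def by (rule suminf_mult[OF summable_discounted_cost[OF assms]])
  finally show ?thesis by simp
qed

lemma policy_entries_differentiable:
  fixes p :: "'a::real_normed_vector \<Rightarrow> (real^'n::finite^'n) \<times> (real^'l::finite^'n)"
  assumes "p differentiable F"
  shows "(\<lambda>z. fst (p z) $ i $ j) differentiable F" and "(\<lambda>z. snd (p z) $ i $ l) differentiable F"
proof -
  obtain P where P: "(p has_derivative P) F"
    using assms by (auto simp: differentiable_def)
  have "bounded_linear (\<lambda>q. fst q $ i $ j :: real)" "bounded_linear (\<lambda>q. snd q $ i $ l :: real)"
    by (intro bounded_linear_compose[OF bounded_linear_vec_nth] bounded_linear_fst bounded_linear_snd)+
  from bounded_linear.has_derivative[OF this(1) P] bounded_linear.has_derivative[OF this(2) P]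
  show "(\<lambda>z. fst (p z) $ i $ j) differentiable F" "(\<lambda>z. snd (p z) $ i $ l) differentiable F"
    by (auto simp: differentiable_def)
qed

lemma Sop_component_differentiable:
  fixes p :: "'a::real_normed_vector \<Rightarrow> (real^'n::finite^'n) \<times> (real^('m::finite + unit)^'n)"
  assumes \<sigma>: "\<And>y. \<sigma> differentiable at y"
    and p: "p differentiable at z0"
    and V: "\<And>t j. (\<lambda>z. V z t $ j) differentiable at z0"
  shows "(\<lambda>z. Sop \<sigma> x T (p z) (V z) t $ j) differentiable at z0"
proof (cases t)
  case (Suc s)
  have "(\<lambda>z. (fst (p z) *v V z s + snd (p z) *v aug (x s)) $ j) differentiable at z0"
    using policy_entries_differentiable[OF p] V by (simp add: matrix_vector_mult_def)
  then have "(\<lambda>z. \<sigma> ((fst (p z) *v V z s + snd (p z) *v aug (x s)) $ j)) differentiable at z0"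
    by (rule differentiable_compose[OF \<sigma>])
  then show ?thesis
    by (cases "Suc s \<le> T") (simp_all add: Suc sigv_def)
qed simp

lemma funpow_Sop_component_differentiable:
  fixes p :: "'a::real_normed_vector \<Rightarrow> (real^'n::finite^'n) \<times> (real^('m::finite + unit)^'n)"
  assumes \<sigma>: "\<And>y. \<sigma> differentiable at y"
    and p: "p differentiable at z0"
    and V: "\<And>t j. (\<lambda>z. V z t $ j) differentiable at z0"
  shows "(\<lambda>z. (Sop \<sigma> x T (p z) ^^ k) (V z) t $ j) differentiable at z0"
proof (induction k arbitrary: t j)
  case 0
  then show ?case by (simp add: V)
next
  case (Suc k)
  then show ?case
    using Sop_component_differentiable[OF \<sigma> p, of "\<lambda>z. (Sop \<sigma> x T (p z) ^^ k) (V z)"] by simp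
qed

lemma cost_component_sum: "cost x T U = (\<Sum>t = 1..T. \<Sum>i\<in>UNIV. (U t $ Inl i - x t $ i)\<^sup>2)"
  unfolding cost_def power2_norm_eq_inner
  by (simp add: inner_vec_def Hproj_def power2_eq_square)

lemma cost_differentiable:
  fixes V :: "'a::real_normed_vector \<Rightarrow> nat \<Rightarrow> real^('m::finite + 'k::finite)"
  assumes "\<And>t j. (\<lambda>z. V z t $ j) differentiable at z0"
  shows "(\<lambda>z. cost x T (V z)) differentiable at z0"
  unfolding cost_component_sum using assms by simp

lemma Jc_differentiable:
  fixes \<gamma> :: real
    and p :: "'a::real_normed_vector \<Rightarrow> (real^('m::finite + 'k::finite)^('m + 'k)) \<times> (real^('m + unit)^('m + 'k))"
  assumes "\<bar>\<gamma>\<bar> < 1"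
    and \<sigma>: "\<And>y. \<sigma> differentiable at y"
    and p: "p differentiable at z0"
    and V: "\<And>t j. (\<lambda>z. V z t $ j) differentiable at z0"
  shows "(\<lambda>z. Jc \<sigma> x T \<gamma> (p z) (V z)) differentiable at z0"
proof -
  have traj_eq: "traj \<sigma> x T (p z) = (Sop \<sigma> x T (p z) ^^ Suc T) (V z)" for z
    by (simp only: funpow_Sop_eq_traj lessI)
  show ?thesis
    unfolding Jc_finite_horizon[OF assms(1)] traj_eq
    by (intro differentiable_add differentiable_sum differentiable_mult differentiable_const
        ballI finite_atMost cost_differentiable funpow_Sop_component_differentiable[OF \<sigma> p V])
qed

lemma Jc_two_parameter_differentiable:
  fixes \<gamma> :: real
    and \<pi> \<Delta> :: "(real^('m::finite + 'k::finite)^('m + 'k)) \<times> (real^('m + unit)^('m + 'k))"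
  assumes \<gamma>: "\<bar>\<gamma>\<bar> < 1"
    and \<sigma>: "\<And>y. \<sigma> differentiable at y"
  shows "(\<lambda>z. Jc \<sigma> x T \<gamma> (\<pi> + fst z *\<^sub>R \<Delta>) (Sop \<sigma> x T (\<pi> + snd z *\<^sub>R \<Delta>) U))
    differentiable at z0"
proof -
  have fst_line: "(\<lambda>z. \<pi> + fst z *\<^sub>R \<Delta>) differentiable at z0"
    and snd_line: "(\<lambda>z. \<pi> + snd z *\<^sub>R \<Delta>) differentiable at z0"
    by (simp_all add: bounded_linear_imp_differentiable bounded_linear_fst bounded_linear_snd)
  have "(\<lambda>z. Sop \<sigma> x T (\<pi> + snd z *\<^sub>R \<Delta>) U t $ j) differentiable at z0" for t j
    by (rule Sop_component_differentiable[OF \<sigma> snd_line]) simp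
  then show ?thesis
    by (rule Jc_differentiable[OF \<gamma> \<sigma> fst_line])
qed

lemma GDERIV_directional_derivative:
  assumes "GDERIV f x :> g"
  shows "((\<lambda>t. f (x + t *\<^sub>R v)) has_real_derivative v \<bullet> g) (at 0)"
proof -
  have "((\<lambda>t. x + t *\<^sub>R v) has_derivative (\<lambda>t. t *\<^sub>R v)) (at 0)"
    by (auto intro!: derivative_eq_intros)
  moreover have "(f has_derivative (\<lambda>h. h \<bullet> g)) (at (x + 0 *\<^sub>R v))"
    using assms by (simp add: gderiv_def)
  ultimately have "((\<lambda>t. f (x + t *\<^sub>R v)) has_derivative (\<lambda>t. t * (v \<bullet> g))) (at 0)"
    using has_derivative_compose by fastforce
  then show ?thesis
    by (rule has_derivative_imp_has_field_derivative) simp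
qed

lemma diagonal_derivative:
  fixes G :: "real \<times> real \<Rightarrow> real"
  assumes "G differentiable at (0, 0)"
    and diag: "\<And>a. G (a, 0) = c + \<gamma> * G (a, a)"
    and "\<gamma> \<noteq> 1"
    and lookahead: "((\<lambda>b. c + \<gamma> * G (0, b)) has_real_derivative d) (at 0)"
  shows "((\<lambda>a. G (a, 0)) has_real_derivative d / (1 - \<gamma>)) (at 0)"
proof -
  obtain D where D: "(G has_derivative D) (at (0, 0))"
    using assms(1) by (auto simp: differentiable_def)
  have lin: "linear D"
    using D by (rule has_derivative_linear)
  have along: "((\<lambda>a. G (f a)) has_derivative (\<lambda>h. D (f h))) (at 0)"
    if "linear f" "f 0 = (0, 0)" for f :: "real \<Rightarrow> real \<times> real"
    using has_derivative_compose[OF linear_imp_has_derivative[OF that(1)], of G D] D that(2)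
    by simp
  have axis: "((\<lambda>a. G (a, 0)) has_derivative (\<lambda>h. D (h, 0))) (at 0)"
    using along[of "\<lambda>h. (h, 0)"] by (simp add: linear_iff)
  have "((\<lambda>a. c + \<gamma> * G (a, a)) has_derivative (\<lambda>h. \<gamma> * D (h, h))) (at 0)"
    using along[of "\<lambda>h. (h, h)"] by (auto simp: linear_iff intro!: derivative_eq_intros)
  with axis have "(\<lambda>h. D (h, 0)) = (\<lambda>h. \<gamma> * D (h, h))"
    unfolding diag by (rule has_derivative_unique)
  then have full: "D (1, 0) = \<gamma> * D (1, 1)"
    by (rule fun_cong)
  have "((\<lambda>b. c + \<gamma> * G (0, b)) has_derivative (\<lambda>h. \<gamma> * D (0, h))) (at 0)"
    using along[of "\<lambda>h. (0, h)"] by (auto simp: linear_iff intro!: derivative_eq_intros)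
  with lookahead have "(\<lambda>h. d * h) = (\<lambda>h. \<gamma> * D (0, h))"
    unfolding has_field_derivative_def by (rule has_derivative_unique)
  from fun_cong[OF this, of 1] have partial: "d = \<gamma> * D (0, 1)"
    by simp
  have "D (1, 1) = D (1, 0) + D (0, 1)"
    using linear_add[OF lin, of "(1, 0)" "(0, 1)"] by simp
  with full partial have "(1 - \<gamma>) * D (1, 0) = d"
    by (simp add: algebra_simps)
  with assms(3) have slope: "D (1, 0) = d / (1 - \<gamma>)"
    by (simp add: eq_divide_eq mult.commute)
  have "h * D (1, 0) = D (h, 0)" for h
    using linear_scale[OF lin, of h "(1, 0)"] by simp
  with axis show ?thesis
    unfolding slope by (rule has_derivative_imp_has_field_derivative)
qed

lemma DERIV_neg_imp_decreasing_right:
  fixes f :: "real \<Rightarrow> real"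
  assumes "(f has_real_derivative l) (at 0)" and "l < 0"
  shows "\<exists>\<alpha>0>0. \<forall>\<alpha>. 0 < \<alpha> \<and> \<alpha> \<le> \<alpha>0 \<longrightarrow> f \<alpha> < f 0"
proof -
  obtain \<epsilon> where "\<epsilon> > 0" and "\<And>h. 0 < h \<Longrightarrow> h < \<epsilon> \<Longrightarrow> f h < f 0"
    using DERIV_neg_dec_right[OF assms] by force
  then show ?thesis
    by (intro exI[of _ "\<epsilon> / 2"]) auto
qed

theorem lemma2:
  fixes \<sigma> :: "real \<Rightarrow> real" and x :: "nat \<Rightarrow> real^'m::finite" and T :: nat and \<gamma> :: real
    and \<pi>i g \<Delta>\<pi> :: "(real^('m + 'k::finite)^('m + 'k)) \<times> (real^('m + unit)^('m + 'k))"
  assumes "T \<ge> 1" and "0 < \<gamma>" and "\<gamma> < 1"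
    and "\<forall>y. \<sigma> y \<in> {-1..1}" and "\<sigma> C1_differentiable_on UNIV"
    and "GDERIV (\<lambda>\<pi>. cost x T (traj \<sigma> x T \<pi>i)
                 + \<gamma> * Jc \<sigma> x T \<gamma> \<pi>i (Sop \<sigma> x T \<pi> (traj \<sigma> x T \<pi>i))) \<pi>i :> g"
    and "\<Delta>\<pi> = - g"
    and "\<Delta>\<pi> \<noteq> 0"
  shows "\<exists>\<alpha>0>0. \<forall>\<alpha>. 0 < \<alpha> \<and> \<alpha> \<le> \<alpha>0 \<longrightarrow>
           Jc \<sigma> x T \<gamma> (\<pi>i + \<alpha> *\<^sub>R \<Delta>\<pi>) (traj \<sigma> x T \<pi>i) < Jc \<sigma> x T \<gamma> \<pi>i (traj \<sigma> x T \<pi>i)"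
proof -
  have \<sigma>: "\<And>y. \<sigma> differentiable at y"
    using assms(5) by (simp add: C1_differentiable_on_eq)
  have \<gamma>: "\<bar>\<gamma>\<bar> < 1"
    using assms(2,3) by simp
  define U where "U = traj \<sigma> x T \<pi>i"
  define G where "G z = Jc \<sigma> x T \<gamma> (\<pi>i + fst z *\<^sub>R \<Delta>\<pi>) (Sop \<sigma> x T (\<pi>i + snd z *\<^sub>R \<Delta>\<pi>) U)"
    for z :: "real \<times> real"
  have axis: "G (a, 0) = Jc \<sigma> x T \<gamma> (\<pi>i + a *\<^sub>R \<Delta>\<pi>) U" for a
    by (simp add: G_def U_def Sop_traj)
  have "G differentiable at (0, 0)"
    unfolding G_def by (rule Jc_two_parameter_differentiable[OF \<gamma> \<sigma>])
  moreover have "G (a, 0) = cost x T U + \<gamma> * G (a, a)" for a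
    using Jc_bellman[OF \<gamma>] unfolding axis by (simp add: G_def)
  moreover have "((\<lambda>b. cost x T U + \<gamma> * G (0, b)) has_real_derivative \<Delta>\<pi> \<bullet> g) (at 0)"
    using GDERIV_directional_derivative[OF assms(6), of \<Delta>\<pi>] by (simp add: G_def U_def)
  ultimately have "((\<lambda>a. G (a, 0)) has_real_derivative \<Delta>\<pi> \<bullet> g / (1 - \<gamma>)) (at 0)"
    using assms(3) by (intro diagonal_derivative) auto
  moreover have "\<Delta>\<pi> \<bullet> g / (1 - \<gamma>) < 0"
    using assms(3,7,8) by (simp add: divide_neg_pos)
  ultimately show ?thesis
    using DERIV_neg_imp_decreasing_right by (fastforce simp: axis U_def)
qed

end
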